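(* Let $W=\sum_{j\in[n]}p_j\mathrm B(\varepsilon_j)\in\mathbb B_n$ and $Q=\sum_{i\in[m]}q_i\mathrm B(\sigma_i)\in\mathbb B_m$, where $(p_j)$, $(q_i)$ are probability vectors and $\varepsilon_1,\dots,\varepsilon_n,\sigma_1,\dots,\sigma_m\in[0,1/2]$. Then $W\preccurlyeq Q$ if and only if there is a 1-matrix $(k_{i,j})_{m\times n}$ of pattern $(q_1,\dots,q_m;p_1,\dots,p_n)$ such that $$p_j\varepsilon_j\ \ge\ \sum_{i\in[m]}k_{i,j}\sigma_i\qquad\text{for every } j\in[n].$$
   Context: A binary-input discrete memoryless channel (BIDMC) $W$ has input $x$ uniformly distributed on $\{0,1\}$, a discrete output alphabet and transition probabilities $\Pr(y\mid x)$. Its LR-profile is $P_W(\varepsilon)=\Pr\big(\mathcal L_W(y)=\varepsilon/(1-\varepsilon)\big)$, $\varepsilon\in[0,1]$, where $\mathcal L_W(\hat y)=\Pr(y=\hat y\mid x=0)/\Pr(y=\hat y\mid x=1)$; $W\cong W'$ (equivalent) if their LR-profiles coincide, and all channel identities are up to $\cong$. $W'$ is a degradation of $W$, written $W'\preccurlyeq W$, if there is a channel $R$ from the output alphabet $\mathcal Y$ of $W$ to the output alphabet $\mathcal Y'$ of $W'$ with $\Pr(y'\mid x'=a)=\sum_{y\in\mathcal Y}\Pr(y\mid x=a)R(y'\mid y)$ for $a\in\{0,1\}$. $\mathrm B(\varepsilon)$ is the BSC with crossover probability $\varepsilon$. For BIDMCs $W_1,\dots,W_n$ and nonnegative $q_1,\dots,q_n$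 with sum 1, the random switching channel $\sum_j q_jW_j$ sends, with probability $q_j$ independently of the input, the input through $W_j$ and outputs the output of $W_j$ together with $j$. $\mathbb B_n$ is the set of BIDMCs equivalent to $\sum_{i\in[n]}p_i\mathrm B(\varepsilon_i)$ for some probability vector $(p_i)$ and $\varepsilon_i\in[0,1]$. $[n]=\{1,\dots,n\}$. A 1-matrix of pattern $(q_1,\dots,q_m;p_1,\dots,p_n)$ is a matrix $(k_{i,j})_{m\times n}$ with $k_{i,j}\ge0$, $\sum_{j\in[n]}k_{i,j}=q_i$ ($i\in[m]$) and $\sum_{i\in[m]}k_{i,j}=p_j$ ($j\in[n]$). *)

theory Defs
  imports Complex_Main
begin

text \<open>A binary-input channel with finite output alphabet Y is represented by its
transition probabilities: W y a = Pr(y | x = a), for y in Y and a :: bool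
(False = input 0, True = input 1).\<close>

text \<open>Degradation: degraded W' Y' W Y means W' \<preccurlyeq> W, i.e. there is a channel R
from Y (output of W) to Y' (output of W') with W'(y'|a) = sum_y W(y|a) R(y'|y).\<close>
definition degraded ::
  "('b \<Rightarrow> bool \<Rightarrow> real) \<Rightarrow> 'b set \<Rightarrow> ('a \<Rightarrow> bool \<Rightarrow> real) \<Rightarrow> 'a set \<Rightarrow> bool" where
  "degraded W' Y' W Y \<longleftrightarrow>
     (\<exists>R :: 'a \<Rightarrow> 'b \<Rightarrow> real.
        (\<forall>y\<in>Y. \<forall>y'\<in>Y'. 0 \<le> R y y') \<and>
        (\<forall>y\<in>Y. (\<Sum>y'\<in>Y'. R y y') = 1) \<and>
        (\<forall>a. \<forall>y'\<in>Y'. W' y' a = (\<Sum>y\<in>Y. W y a * R y y')))"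

definition bsc :: "real \<Rightarrow> bool \<Rightarrow> bool \<Rightarrow> real" where
  "bsc e y a = (if y = a then 1 - e else e)"

text \<open>Random switching channel sum_j p_j B(e_j): output (j, y), output alphabet
{1..n} \<times> UNIV.\<close>
definition bsc_switch :: "(nat \<Rightarrow> real) \<Rightarrow> (nat \<Rightarrow> real) \<Rightarrow> nat \<times> bool \<Rightarrow> bool \<Rightarrow> real" where
  "bsc_switch p e = (\<lambda>(j, y) a. p j * bsc (e j) y a)"

definition one_matrix ::
  "nat \<Rightarrow> nat \<Rightarrow> (nat \<Rightarrow> real) \<Rightarrow> (nat \<Rightarrow> real) \<Rightarrow> (nat \<Rightarrow> nat \<Rightarrow> real) \<Rightarrow> bool" where
  "one_matrix m n q p k \<longleftrightarrow>
     (\<forall>i\<in>{1..m}. \<forall>j\<in>{1..n}. 0 \<le> k i j) \<and>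
     (\<forall>i\<in>{1..m}. (\<Sum>j=1..n. k i j) = q i) \<and>
     (\<forall>j\<in>{1..n}. (\<Sum>i=1..m. k i j) = p j)"

end

theory Submission
  imports Defs
begin

text \<open>
  Forward direction: a degrading channel R induces the 1-matrix whose entry k i j is the
  probability, under uniform input, that Q uses its component i while the degraded output lies
  in component j of W. Within each pair (i, j) the bit passes through B(s i) and then through
  R, and since s i \<le> 1/2 \<le> 1 - s i the crossover mass of this route is at least s i times its
  total mass; summing over i bounds p j * e j from below.

  Backward direction: send component i of Q to component j of W with probability k i j / q i
  and then flip the bit by an extra B(t j). As B(s) followed by B(t) is B(s + t - 2 s t), the
  crossover mass arriving in component j is S + t j (p j - 2 S) with S = \<Sum>i. k i j * s i,
  which moves from S to p j / 2 as t j goes from 0 to 1/2; so some t j hits p j * e j.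
\<close>

lemma bsc_sum_outputs [simp]: "(\<Sum>y\<in>UNIV. bsc e y a) = 1"
  by (simp add: UNIV_bool bsc_def)

lemma bsc_cascade:
  "(\<Sum>y\<in>UNIV. bsc s y a * bsc t b y) = bsc (s + t - 2 * s * t) b a"
  by (cases a; cases b) (simp_all add: UNIV_bool bsc_def algebra_simps)

lemma sum_mult_bsc:
  "(\<Sum>i\<in>I. k i * bsc (c i) b a) =
     (if b = a then sum k I - (\<Sum>i\<in>I. k i * c i) else (\<Sum>i\<in>I. k i * c i))"
  by (simp add: bsc_def algebra_simps sum_subtractf)

lemma bsc_crossover_lower_bound:
  fixes r :: "bool \<Rightarrow> bool \<Rightarrow> real"
  assumes "0 \<le> s" "s \<le> 1/2" "\<And>y y'. 0 \<le> r y y'"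
  shows "s * (\<Sum>y\<in>UNIV. \<Sum>y'\<in>UNIV. r y y') \<le> (\<Sum>a\<in>UNIV. \<Sum>y\<in>UNIV. bsc s y a * r y (\<not> a))"
proof -
  have "0 \<le> (1 - 2 * s) * (r False True + r True False)"
    using assms by simp
  then show ?thesis by (simp add: UNIV_bool bsc_def algebra_simps)
qed

lemma cascade_parameter_exists:
  fixes S P E :: real
  assumes "S \<le> P * E" "P * E \<le> P / 2"
  shows "\<exists>t. 0 \<le> t \<and> t \<le> 1 \<and> S + t * (P - 2 * S) = P * E"
proof (cases "P = 2 * S")
  case True
  with assms show ?thesis by (intro exI[of _ 0]) simp
next
  case False
  with assms show ?thesis
    by (intro exI[of _ "(P * E - S) / (P - 2 * S)"]) (simp add: field_simps)
qed

lemma one_matrix_marginals_nonneg: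
  assumes "one_matrix m n q p k"
  shows "\<forall>i\<in>{1..m}. 0 \<le> q i" and "\<forall>j\<in>{1..n}. 0 \<le> p j"
  using assms unfolding one_matrix_def by (metis sum_nonneg)+

lemma one_matrix_zero_row:
  assumes "one_matrix m n q p k" "i \<in> {1..m}" "j \<in> {1..n}" "q i = 0"
  shows "k i j = 0"
proof -
  have "(\<Sum>j\<in>{1..n}. k i j) = 0" "\<forall>j\<in>{1..n}. 0 \<le> k i j"
    using assms unfolding one_matrix_def by auto
  then show ?thesis
    using assms(3) sum_nonneg_eq_0_iff[of "{1..n}" "k i"] by blast
qed

lemma one_matrix_cascade_parameters:
  fixes p e s :: "nat \<Rightarrow> real"
  assumes k: "one_matrix m n q p k" and e: "\<forall>j\<in>{1..n}. e j \<le> 1/2"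
    and crossover: "\<forall>j\<in>{1..n}. p j * e j \<ge> (\<Sum>i=1..m. k i j * s i)"
  shows "\<exists>t. \<forall>j\<in>{1..n}. 0 \<le> t j \<and> t j \<le> 1 \<and>
           (\<Sum>i=1..m. k i j * (s i + t j - 2 * s i * t j)) = p j * e j"
proof (rule bchoice, rule ballI)
  fix j assume j: "j \<in> {1..n}"
  define S where "S = (\<Sum>i=1..m. k i j * s i)"
  have "p j * e j \<le> p j * (1/2)"
    using j e one_matrix_marginals_nonneg(2)[OF k] by (intro mult_left_mono) auto
  then obtain t where t: "0 \<le> t" "t \<le> 1" "S + t * (p j - 2 * S) = p j * e j"
    using cascade_parameter_exists[of S "p j" "e j"] crossover j by (auto simp: S_def)
  have "(\<Sum>i=1..m. k i j * (s i + t - 2 * s i * t)) = S + t * (\<Sum>i=1..m. k i j) - 2 * t * S"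
    by (simp add: S_def algebra_simps sum.distrib sum_subtractf sum_distrib_left)
  also have "\<dots> = S + t * (p j - 2 * S)"
    using k j unfolding one_matrix_def by (simp add: algebra_simps)
  finally show "\<exists>t. 0 \<le> t \<and> t \<le> 1 \<and> (\<Sum>i=1..m. k i j * (s i + t - 2 * s i * t)) = p j * e j"
    using t by auto
qed

lemma degraded_bsc_switchE:
  fixes p e q s :: "nat \<Rightarrow> real"
  assumes "degraded (bsc_switch p e) ({1..n} \<times> UNIV) (bsc_switch q s) ({1..m} \<times> UNIV)"
  obtains R :: "nat \<times> bool \<Rightarrow> nat \<times> bool \<Rightarrow> real" where
    "\<And>i y j b. i \<in> {1..m} \<Longrightarrow> j \<in> {1..n} \<Longrightarrow> 0 \<le> R (i, y) (j, b)"
    "\<And>i y. i \<in> {1..m} \<Longrightarrow> (\<Sum>j=1..n. \<Sum>b\<in>UNIV. R (i, y) (j, b)) = 1"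
    "\<And>j b a. j \<in> {1..n} \<Longrightarrow>
       p j * bsc (e j) b a = (\<Sum>i=1..m. q i * (\<Sum>y\<in>UNIV. bsc (s i) y a * R (i, y) (j, b)))"
proof -
  obtain R :: "nat \<times> bool \<Rightarrow> nat \<times> bool \<Rightarrow> real" where
    R_nonneg: "\<forall>x\<in>{1..m} \<times> UNIV. \<forall>x'\<in>{1..n} \<times> UNIV. 0 \<le> R x x'" and
    R_stochastic: "\<forall>x\<in>{1..m} \<times> UNIV. (\<Sum>x'\<in>{1..n} \<times> UNIV. R x x') = 1" and
    R_degrades: "\<forall>a. \<forall>x'\<in>{1..n} \<times> UNIV.
      bsc_switch p e x' a = (\<Sum>x\<in>{1..m} \<times> UNIV. bsc_switch q s x a * R x x')"
    using assms unfolding degraded_def by blast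
  show thesis
  proof (rule that[of R])
    show "0 \<le> R (i, y) (j, b)" if "i \<in> {1..m}" "j \<in> {1..n}" for i y j b
      using R_nonneg that by blast
    show "(\<Sum>j=1..n. \<Sum>b\<in>UNIV. R (i, y) (j, b)) = 1" if "i \<in> {1..m}" for i y
      using R_stochastic that by (simp add: sum.cartesian_product')
    show "p j * bsc (e j) b a = (\<Sum>i=1..m. q i * (\<Sum>y\<in>UNIV. bsc (s i) y a * R (i, y) (j, b)))"
      if "j \<in> {1..n}" for j b a
      using R_degrades that
      by (simp add: bsc_switch_def sum.cartesian_product' sum_distrib_left mult.assoc)
  qed
qed

lemma degraded_bsc_switch_imp_one_matrix:
  fixes p e q s :: "nat \<Rightarrow> real"
  assumes q: "\<forall>i\<in>{1..m}. 0 \<le> q i" and s: "\<forall>i\<in>{1..m}. 0 \<le> s i \<and> s i \<le> 1/2"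
    and "degraded (bsc_switch p e) ({1..n} \<times> UNIV) (bsc_switch q s) ({1..m} \<times> UNIV)"
  shows "\<exists>k. one_matrix m n q p k \<and> (\<forall>j\<in>{1..n}. p j * e j \<ge> (\<Sum>i=1..m. k i j * s i))"
proof -
  obtain R where R_nonneg: "\<And>i y j b. i \<in> {1..m} \<Longrightarrow> j \<in> {1..n} \<Longrightarrow> 0 \<le> R (i, y) (j, b)"
    and R_stochastic: "\<And>i y. i \<in> {1..m} \<Longrightarrow> (\<Sum>j=1..n. \<Sum>b\<in>UNIV. R (i, y) (j, b)) = 1"
    and channel: "\<And>j b a. j \<in> {1..n} \<Longrightarrow>
       p j * bsc (e j) b a = (\<Sum>i=1..m. q i * (\<Sum>y\<in>UNIV. bsc (s i) y a * R (i, y) (j, b)))"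
    using degraded_bsc_switchE[OF assms(3)] by blast
  define k where "k i j = q i / 2 * (\<Sum>y\<in>UNIV. \<Sum>b\<in>UNIV. R (i, y) (j, b))" for i j
  have "one_matrix m n q p k"
    unfolding one_matrix_def
  proof (intro conjI ballI)
    fix i j assume "i \<in> {1..m}" "j \<in> {1..n}"
    then show "0 \<le> k i j"
      unfolding k_def using R_nonneg q by (simp add: sum_nonneg)
  next
    fix i assume i: "i \<in> {1..m}"
    have "(\<Sum>j=1..n. k i j) = q i / 2 * (\<Sum>y\<in>UNIV. \<Sum>j=1..n. \<Sum>b\<in>UNIV. R (i, y) (j, b))"
      unfolding k_def sum_distrib_left[symmetric] by (subst sum.swap) (rule refl)
    with R_stochastic[OF i] show "(\<Sum>j=1..n. k i j) = q i"
      by simp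
  next
    fix j assume j: "j \<in> {1..n}"
    have "2 * p j = (\<Sum>a\<in>UNIV. \<Sum>b\<in>UNIV. p j * bsc (e j) b a)"
      by (simp add: sum_distrib_left[symmetric])
    also have "\<dots> = (\<Sum>i=1..m. q i * (\<Sum>a\<in>UNIV. \<Sum>b\<in>UNIV. \<Sum>y\<in>UNIV. bsc (s i) y a * R (i, y) (j, b)))"
      unfolding channel[OF j] by (simp only: sum_distrib_left sum.swap[of _ "{1..m}" UNIV])
    also have "\<dots> = 2 * (\<Sum>i=1..m. k i j)"
      by (simp add: k_def sum_distrib_left UNIV_bool bsc_def algebra_simps)
    finally show "(\<Sum>i=1..m. k i j) = p j" by simp
  qed
  moreover have "p j * e j \<ge> (\<Sum>i=1..m. k i j * s i)" if j: "j \<in> {1..n}" for j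
  proof -
    have "2 * (\<Sum>i=1..m. k i j * s i) =
        (\<Sum>i=1..m. q i * (s i * (\<Sum>y\<in>UNIV. \<Sum>b\<in>UNIV. R (i, y) (j, b))))"
      by (simp add: k_def sum_distrib_left algebra_simps)
    also have "\<dots> \<le> (\<Sum>i=1..m. q i * (\<Sum>a\<in>UNIV. \<Sum>y\<in>UNIV. bsc (s i) y a * R (i, y) (j, \<not> a)))"
      using R_nonneg q s j
      by (intro sum_mono mult_left_mono bsc_crossover_lower_bound) auto
    also have "\<dots> = (\<Sum>a\<in>UNIV. p j * bsc (e j) (\<not> a) a)"
      unfolding channel[OF j] by (simp only: sum_distrib_left sum.swap[of _ "{1..m}" UNIV])
    also have "\<dots> = 2 * (p j * e j)"
      by (simp add: UNIV_bool bsc_def)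
    finally show ?thesis by simp
  qed
  ultimately show ?thesis by blast
qed

lemma degraded_bsc_switch_if_cascade:
  fixes p e q s t :: "nat \<Rightarrow> real" and k :: "nat \<Rightarrow> nat \<Rightarrow> real"
  assumes k: "one_matrix m n q p k" and p_sum: "(\<Sum>j=1..n. p j) = 1"
    and t: "\<forall>j\<in>{1..n}. 0 \<le> t j \<and> t j \<le> 1"
    and crossover: "\<forall>j\<in>{1..n}. (\<Sum>i=1..m. k i j * (s i + t j - 2 * s i * t j)) = p j * e j"
  shows "degraded (bsc_switch p e) ({1..n} \<times> UNIV) (bsc_switch q s) ({1..m} \<times> UNIV)"
proof -
  have k_nonneg: "\<forall>i\<in>{1..m}. \<forall>j\<in>{1..n}. 0 \<le> k i j"
    and rows: "\<forall>i\<in>{1..m}. (\<Sum>j=1..n. k i j) = q i"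
    and columns: "\<forall>j\<in>{1..n}. (\<Sum>i=1..m. k i j) = p j"
    using k unfolding one_matrix_def by blast+
  \<comment> \<open>A row with q i = 0 carries no mass, so any distribution (here p) will do.\<close>
  define w where "w i j = (if q i = 0 then p j else k i j / q i)" for i j
  have w_nonneg: "0 \<le> w i j" if "i \<in> {1..m}" "j \<in> {1..n}" for i j
    using that k_nonneg one_matrix_marginals_nonneg[OF k] unfolding w_def by simp
  have w_stochastic: "(\<Sum>j=1..n. w i j) = 1" if "i \<in> {1..m}" for i
  proof (cases "q i = 0")
    case True
    with p_sum show ?thesis by (simp add: w_def)
  next
    case False
    with rows that show ?thesis by (simp add: w_def sum_divide_distrib[symmetric])
  qed
  have q_w: "q i * w i j = k i j" if "i \<in> {1..m}" "j \<in> {1..n}" for i j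
    using that one_matrix_zero_row[OF k] unfolding w_def by auto
  define R where "R = (\<lambda>(i, y) (j, b). w i j * bsc (t j) b y)"
  show ?thesis unfolding degraded_def
  proof (intro exI[of _ R] conjI ballI allI)
    fix x x' assume "x \<in> {1..m} \<times> (UNIV :: bool set)" "x' \<in> {1..n} \<times> (UNIV :: bool set)"
    then show "0 \<le> R x x'"
      using w_nonneg t by (auto simp: R_def bsc_def)
  next
    fix x assume "x \<in> {1..m} \<times> (UNIV :: bool set)"
    then show "(\<Sum>x'\<in>{1..n} \<times> UNIV. R x x') = 1"
      using w_stochastic
      by (auto simp: R_def sum.cartesian_product' sum_distrib_left[symmetric])
  next
    fix a x' assume "x' \<in> {1..n} \<times> (UNIV :: bool set)"
    then obtain j b where x': "x' = (j, b)" and j: "j \<in> {1..n}" by blast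
    have "(\<Sum>x\<in>{1..m} \<times> UNIV. bsc_switch q s x a * R x x') =
        (\<Sum>i=1..m. q i * w i j * (\<Sum>y\<in>UNIV. bsc (s i) y a * bsc (t j) b y))"
      by (simp add: x' R_def bsc_switch_def sum.cartesian_product' sum_distrib_left algebra_simps)
    also have "\<dots> = (\<Sum>i=1..m. k i j * bsc (s i + t j - 2 * s i * t j) b a)"
      using q_w j by (simp add: bsc_cascade)
    also have "\<dots> = p j * bsc (e j) b a"
      using columns crossover j by (simp add: sum_mult_bsc) (simp add: bsc_def algebra_simps)
    finally show "bsc_switch p e x' a = (\<Sum>x\<in>{1..m} \<times> UNIV. bsc_switch q s x a * R x x')"
      by (simp add: x' bsc_switch_def)
  qed
qed

theorem theorem1:
  fixes n m :: nat and p e q s :: "nat \<Rightarrow> real"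
  assumes "\<forall>j\<in>{1..n}. 0 \<le> p j" and "(\<Sum>j=1..n. p j) = 1"
      and "\<forall>i\<in>{1..m}. 0 \<le> q i" and "(\<Sum>i=1..m. q i) = 1"
      and "\<forall>j\<in>{1..n}. 0 \<le> e j \<and> e j \<le> 1/2"
      and "\<forall>i\<in>{1..m}. 0 \<le> s i \<and> s i \<le> 1/2"
  shows "degraded (bsc_switch p e) ({1..n} \<times> UNIV) (bsc_switch q s) ({1..m} \<times> UNIV)
         \<longleftrightarrow> (\<exists>k. one_matrix m n q p k \<and>
                  (\<forall>j\<in>{1..n}. p j * e j \<ge> (\<Sum>i=1..m. k i j * s i)))"
proof
  assume "degraded (bsc_switch p e) ({1..n} \<times> UNIV) (bsc_switch q s) ({1..m} \<times> UNIV)"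
  with assms(3,6) show "\<exists>k. one_matrix m n q p k \<and> (\<forall>j\<in>{1..n}. p j * e j \<ge> (\<Sum>i=1..m. k i j * s i))"
    by (rule degraded_bsc_switch_imp_one_matrix)
next
  assume "\<exists>k. one_matrix m n q p k \<and> (\<forall>j\<in>{1..n}. p j * e j \<ge> (\<Sum>i=1..m. k i j * s i))"
  then obtain k where k: "one_matrix m n q p k"
    and crossover: "\<forall>j\<in>{1..n}. p j * e j \<ge> (\<Sum>i=1..m. k i j * s i)"
    by blast
  obtain t where "\<forall>j\<in>{1..n}. 0 \<le> t j \<and> t j \<le> 1 \<and>
      (\<Sum>i=1..m. k i j * (s i + t j - 2 * s i * t j)) = p j * e j"
    using one_matrix_cascade_parameters[OF k _ crossover] assms(5) by blast
  then show "degraded (bsc_switch p e) ({1..n} \<times> UNIV) (bsc_switch q s) ({1..m} \<times> UNIV)"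
    using degraded_bsc_switch_if_cascade[OF k assms(2)] by blast
qed

end
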